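(* Let $\bar f:[-1,0]\to\mathbb R$ be continuous with $0<\bar f(x)<1/2$ for all $x\in[-1,0]$, and let $b=\sqrt{1-2\bar f(-1)}\in(0,1)$. Let $\bar T$ be a solution of $(1-x^2)\frac{d\bar T}{dx}+\bar T^2=-2(1-x^2)+(1-2\bar f(x))$, continuous at $x=-1$ with $\bar T(-1)=b$. Then $\bar T$ can be extended as a solution to the whole interval $[-1,0]$, and $\bar T(0)<0$. *)

theory Defs
  imports "HOL-Analysis.Analysis"
begin

end

theory Submission
  imports Defs
begin

text \<open>
  With \<open>8 \<beta> \<le> 1 - 2 f\<close> on \<open>[-1, 0]\<close>, the line \<open>y = -x\<close> and the curve
  \<open>y = (1 - x\<^sup>2)(1 + 2 \<beta> x) / (x - \<beta> (1 - x\<^sup>2))\<close> are barriers for the Riccati equation: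
  wherever a solution touches one of them, the equation forces it to cross back into the region
  between them. Since \<open>T(-1) = b \<in> (0, 1)\<close> starts in this region, every solution stays there;
  in particular it is bounded by \<open>1 / \<beta>\<close> and satisfies \<open>T(0) < 0\<close>. The a priori bound makes it
  harmless to clip the nonlinearity at \<open>\<plusminus>1 / \<beta>\<close>; the clipped equation is globally Lipschitz
  and solvable on \<open>[a, 0]\<close> by the Banach fixed point theorem in a weighted sup norm, and a
  Gronwall estimate shows that the solution obtained agrees with \<open>T\<close> where both are defined.
\<close>

section \<open>Picard iteration for Lipschitz equations\<close>

lemma exp_weighted_integral_diff_bound:
  fixes g1 g2 :: "real \<Rightarrow> real"
  assumes "a \<le> s" "L > 0" "C \<ge> 0"
    and "continuous_on {a..s} g1" "continuous_on {a..s} g2"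
    and bound: "\<And>t. t \<in> {a..s} \<Longrightarrow> \<bar>g1 t - g2 t\<bar> \<le> C * exp (L * t)"
  shows "\<bar>integral {a..s} g1 - integral {a..s} g2\<bar> \<le> C * exp (L * s) / L"
proof -
  have int: "g1 integrable_on {a..s}" "g2 integrable_on {a..s}"
    using assms(4,5) by (auto intro: integrable_continuous_real)
  have exp_int: "((\<lambda>t. C * exp (L * t)) has_integral (C * exp (L * s) / L - C * exp (L * a) / L)) {a..s}"
  proof (rule fundamental_theorem_of_calculus[OF \<open>a \<le> s\<close>])
    show "((\<lambda>t. C * exp (L * t) / L) has_vector_derivative C * exp (L * t)) (at t within {a..s})" for t
      unfolding has_real_derivative_iff_has_vector_derivative[symmetric]
      using \<open>L > 0\<close> by (auto intro!: derivative_eq_intros)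
  qed
  have "norm (integral {a..s} (\<lambda>t. g1 t - g2 t)) \<le> integral {a..s} (\<lambda>t. C * exp (L * t))"
    using int bound has_integral_integrable[OF exp_int]
    by (intro integral_norm_bound_integral integrable_diff) auto
  also have "\<dots> = C * exp (L * s) / L - C * exp (L * a) / L"
    using exp_int by (rule integral_unique)
  also have "\<dots> \<le> C * exp (L * s) / L"
    using assms(2,3) by simp
  finally show ?thesis
    by (simp add: integral_diff[OF int])
qed

lemma weighted_picard_contraction:
  fixes G :: "real \<Rightarrow> real \<Rightarrow> real" and \<psi>1 \<psi>2 :: "real \<Rightarrow> real"
  assumes "a \<le> s" "s \<le> b" "K \<ge> 0" "L > 0" "2 * K \<le> L"
    and G_cont: "\<And>\<phi>. continuous_on {a..b} \<phi> \<Longrightarrow> continuous_on {a..b} (\<lambda>t. G t (\<phi> t))"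
    and G_lip: "\<And>t u v. t \<in> {a..b} \<Longrightarrow> \<bar>G t u - G t v\<bar> \<le> K * \<bar>u - v\<bar>"
    and "continuous_on {a..b} \<psi>1" "continuous_on {a..b} \<psi>2"
    and \<psi>_dist: "\<And>t. \<bar>\<psi>1 t - \<psi>2 t\<bar> \<le> D"
  shows "exp (- L * s) * \<bar>integral {a..s} (\<lambda>t. G t (exp (L * t) * \<psi>1 t))
           - integral {a..s} (\<lambda>t. G t (exp (L * t) * \<psi>2 t))\<bar> \<le> D / 2"
proof -
  have L: "L > 0" "K / L \<le> 1 / 2"
    using assms(4,5) by (auto simp: field_simps)
  have "continuous_on {a..s} (\<lambda>t. G t (exp (L * t) * \<psi> t))" if "continuous_on {a..b} \<psi>" for \<psi>
    using assms(1,2) that by (intro continuous_on_subset[OF G_cont] continuous_intros) auto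
  moreover have "\<bar>G t (exp (L * t) * \<psi>1 t) - G t (exp (L * t) * \<psi>2 t)\<bar> \<le> (K * D) * exp (L * t)"
    if "t \<in> {a..s}" for t
  proof -
    have "\<bar>G t (exp (L * t) * \<psi>1 t) - G t (exp (L * t) * \<psi>2 t)\<bar>
          \<le> K * \<bar>exp (L * t) * \<psi>1 t - exp (L * t) * \<psi>2 t\<bar>"
      using that assms(2) by (intro G_lip) auto
    also have "\<dots> = K * (exp (L * t) * \<bar>\<psi>1 t - \<psi>2 t\<bar>)"
      by (simp add: abs_mult right_diff_distrib[symmetric])
    also have "\<dots> \<le> K * (exp (L * t) * D)"
      using \<psi>_dist[of t] \<open>K \<ge> 0\<close> by (intro mult_left_mono) auto
    finally show ?thesis by (simp add: mult_ac)
  qed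
  moreover have "D \<ge> 0"
    using \<psi>_dist[of a] by linarith
  ultimately have "\<bar>integral {a..s} (\<lambda>t. G t (exp (L * t) * \<psi>1 t))
      - integral {a..s} (\<lambda>t. G t (exp (L * t) * \<psi>2 t))\<bar> \<le> K * D * exp (L * s) / L"
    using assms(1,8,9) L \<open>K \<ge> 0\<close> by (intro exp_weighted_integral_diff_bound) auto
  then have "exp (- L * s) * \<bar>integral {a..s} (\<lambda>t. G t (exp (L * t) * \<psi>1 t))
      - integral {a..s} (\<lambda>t. G t (exp (L * t) * \<psi>2 t))\<bar> \<le> (K / L) * D"
    by (simp add: exp_minus field_simps)
  also have "\<dots> \<le> D / 2"
    using mult_right_mono[OF L(2) \<open>D \<ge> 0\<close>] by simp
  finally show ?thesis .
qed

lemma apply_Bcontfun_clamp: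
  fixes g :: "real \<Rightarrow> real"
  assumes "continuous_on {a..b} g"
  shows "apply_bcontfun (Bcontfun (\<lambda>x. g (clamp a b x))) x = g (clamp a b x)"
proof -
  have "continuous_on (cbox a b) g"
    using assms by (simp only: cbox_interval)
  then obtain G :: "real \<Rightarrow>\<^sub>C real" where "\<And>x. G x = g (clamp a b x)"
    by (rule continuous_on_cbox_bcontfunE) blast
  then have "(\<lambda>x. g (clamp a b x)) \<in> bcontfun"
    by (metis apply_bcontfun ext)
  then show ?thesis
    by (simp add: Bcontfun_inverse)
qed

text \<open>
  The Picard map is iterated on \<open>\<psi> = e\<^sup>-\<^sup>L\<^sup>t \<phi>\<close> (Bielecki's trick): in these coordinates it is a
  \<open>1/2\<close>-contraction for the sup norm, and \<open>clamp\<close> turns functions on \<open>[a, b]\<close> into elements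
  of the complete space \<open>real \<Rightarrow>\<^sub>C real\<close>.
\<close>
lemma lipschitz_integral_equation_solvable:
  fixes G :: "real \<Rightarrow> real \<Rightarrow> real"
  assumes "a \<le> b" "K \<ge> 0"
    and G_cont: "\<And>\<phi>. continuous_on {a..b} \<phi> \<Longrightarrow> continuous_on {a..b} (\<lambda>t. G t (\<phi> t))"
    and G_lip: "\<And>t u v. t \<in> {a..b} \<Longrightarrow> \<bar>G t u - G t v\<bar> \<le> K * \<bar>u - v\<bar>"
  shows "\<exists>\<phi>. continuous_on {a..b} \<phi> \<and> (\<forall>x\<in>{a..b}. \<phi> x = y0 + integral {a..x} (\<lambda>t. G t (\<phi> t)))"
proof -
  define L where "L = 2 * K + 1"
  have L: "L > 0" "2 * K \<le> L"
    using \<open>K \<ge> 0\<close> by (auto simp: L_def)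
  define H where "H \<psi> x = exp (- L * x) * (y0 + integral {a..x} (\<lambda>t. G t (exp (L * t) * \<psi> t)))"
    for \<psi> :: "real \<Rightarrow> real" and x
  have H_cont: "continuous_on {a..b} (H \<psi>)" if "continuous_on {a..b} \<psi>" for \<psi>
  proof -
    have "continuous_on {a..b} (\<lambda>t. G t (exp (L * t) * \<psi> t))"
      using that by (intro G_cont continuous_intros)
    from indefinite_integral_continuous_1[OF integrable_continuous_real[OF this]]
    show ?thesis unfolding H_def by (intro continuous_intros)
  qed
  define \<Phi> where "\<Phi> \<psi> = Bcontfun (\<lambda>x. H \<psi> (clamp a b x))" for \<psi> :: "real \<Rightarrow>\<^sub>C real"
  have \<Phi>: "\<Phi> \<psi> x = H \<psi> (clamp a b x)" for \<psi> x
    unfolding \<Phi>_def using H_cont[OF continuous_on_apply_bcontfun] by (rule apply_Bcontfun_clamp)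
  have "dist (\<Phi> \<psi>1) (\<Phi> \<psi>2) \<le> 1 / 2 * dist \<psi>1 \<psi>2" for \<psi>1 \<psi>2
  proof (rule dist_bound)
    fix x
    have s: "a \<le> clamp a b x" "clamp a b x \<le> b"
      using clamp_in_interval[of a b x] \<open>a \<le> b\<close> by (auto simp: cbox_interval)
    have "\<bar>\<psi>1 t - \<psi>2 t\<bar> \<le> dist \<psi>1 \<psi>2" for t
      using dist_bounded[of \<psi>1 t \<psi>2] by (simp add: dist_real_def)
    from weighted_picard_contraction[OF s \<open>K \<ge> 0\<close> L G_cont G_lip _ _ this]
    show "dist (\<Phi> \<psi>1 x) (\<Phi> \<psi>2 x) \<le> 1 / 2 * dist \<psi>1 \<psi>2"
      by (simp add: \<Phi> H_def dist_real_def abs_mult right_diff_distrib[symmetric])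
  qed
  then obtain \<psi> where \<psi>: "\<Phi> \<psi> = \<psi>"
    using banach_fix_type[of "1 / 2" \<Phi>] by auto
  show ?thesis
  proof (intro exI conjI ballI)
    show "continuous_on {a..b} (\<lambda>t. exp (L * t) * \<psi> t)"
      by (intro continuous_intros) auto
    fix x assume "x \<in> {a..b}"
    then have "clamp a b x = x"
      using clamp_cancel_cbox[of x a b] by (simp only: cbox_interval)
    then have "\<psi> x = H \<psi> x"
      using \<Phi>[of \<psi> x] by (simp only: \<psi>)
    then show "exp (L * x) * \<psi> x = y0 + integral {a..x} (\<lambda>t. G t (exp (L * t) * \<psi> t))"
      by (simp add: H_def exp_minus field_simps)
  qed
qed

lemma lipschitz_ode_solvable:
  fixes G :: "real \<Rightarrow> real \<Rightarrow> real"
  assumes "a \<le> b" "K \<ge> 0"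
    and G_cont: "\<And>\<phi>. continuous_on {a..b} \<phi> \<Longrightarrow> continuous_on {a..b} (\<lambda>t. G t (\<phi> t))"
    and G_lip: "\<And>t u v. t \<in> {a..b} \<Longrightarrow> \<bar>G t u - G t v\<bar> \<le> K * \<bar>u - v\<bar>"
  shows "\<exists>\<phi>. \<phi> a = y0 \<and> (\<forall>x\<in>{a..b}. (\<phi> has_real_derivative G x (\<phi> x)) (at x within {a..b}))"
proof -
  obtain \<phi> where \<phi>_cont: "continuous_on {a..b} \<phi>"
    and \<phi>_eq: "\<And>x. x \<in> {a..b} \<Longrightarrow> \<phi> x = y0 + integral {a..x} (\<lambda>t. G t (\<phi> t))"
    using lipschitz_integral_equation_solvable[OF assms] by blast
  show ?thesis
  proof (intro exI conjI ballI)
    show "\<phi> a = y0"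
      using \<phi>_eq[of a] \<open>a \<le> b\<close> by simp
    fix x assume x: "x \<in> {a..b}"
    have "((\<lambda>u. y0 + integral {a..u} (\<lambda>t. G t (\<phi> t))) has_real_derivative G x (\<phi> x)) (at x within {a..b})"
      using integral_has_real_derivative[OF G_cont[OF \<phi>_cont] x] by (auto intro!: derivative_eq_intros)
    then show "(\<phi> has_real_derivative G x (\<phi> x)) (at x within {a..b})"
      by (rule has_field_derivative_transform_within[where d = 1]) (use x \<phi>_eq in auto)
  qed
qed

section \<open>Barriers\<close>

lemma pos_if_pos_derivative_at_zeros:
  fixes Z :: "real \<Rightarrow> real"
  assumes "continuous_on {p..q} Z" "Z p > 0"
    and deriv: "\<And>x. x \<in> {p<..q} \<Longrightarrow> Z x = 0 \<Longrightarrow> \<exists>D>0. (Z has_real_derivative D) (at x within {p..q})"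
    and "x \<in> {p..q}"
  shows "Z x > 0"
proof (rule ccontr)
  assume "\<not> Z x > 0"
  define A where "A = {p..q} \<inter> Z -` {..0}"
  have "x \<in> A" "bdd_below A"
    using \<open>x \<in> {p..q}\<close> \<open>\<not> Z x > 0\<close> by (auto simp: A_def)
  moreover have "closed A"
    unfolding A_def using assms(1) by (rule continuous_closed_preimage) auto
  ultimately have "Inf A \<in> A"
    by (intro closed_contains_Inf) auto
  define x1 where "x1 = Inf A"
  have x1: "p < x1" "x1 \<le> q" "Z x1 \<le> 0"
    using \<open>Inf A \<in> A\<close> \<open>Z p > 0\<close> by (auto simp: A_def x1_def less_eq_real_def)
  have before: "Z t > 0" if "p \<le> t" "t < x1" for t
    using cInf_lower[OF _ \<open>bdd_below A\<close>, of t] that x1 by (force simp: A_def x1_def)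
  have "Z x1 = 0"
  proof (rule ccontr)
    assume "Z x1 \<noteq> 0"
    then obtain t where "p \<le> t" "t \<le> x1" "Z t = 0"
      using IVT2'[of Z x1 0 p] x1 \<open>Z p > 0\<close> continuous_on_subset[OF assms(1), of "{p..x1}"]
      by fastforce
    with before[of t] \<open>Z x1 \<noteq> 0\<close> show False
      by (cases "t = x1") auto
  qed
  then obtain D where "D > 0" "(Z has_real_derivative D) (at x1 within {p..q})"
    using deriv[of x1] x1 by auto
  then obtain d where "d > 0"
    and left: "\<And>h. h > 0 \<Longrightarrow> x1 - h \<in> {p..q} \<Longrightarrow> h < d \<Longrightarrow> Z (x1 - h) < Z x1"
    using has_real_derivative_pos_inc_left by blast
  define h where "h = min d (x1 - p) / 2"
  have "h > 0" "h < d" "p \<le> x1 - h" "x1 - h < x1"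
    using \<open>d > 0\<close> x1 by (auto simp: h_def min_def field_simps)
  then show False
    using left[of h] before[of "x1 - h"] \<open>Z x1 = 0\<close> x1 by auto
qed

text \<open>
  For \<open>x \<in> [-1, 0]\<close> the factor \<open>x - \<beta> (1 - x\<^sup>2)\<close> is negative, so \<open>lower_barrier \<beta> x y > 0\<close> says
  that \<open>y\<close> lies above the curve \<open>(1 - x\<^sup>2)(1 + 2 \<beta> x) / (x - \<beta> (1 - x\<^sup>2))\<close>.
\<close>
definition lower_barrier :: "real \<Rightarrow> real \<Rightarrow> real \<Rightarrow> real" where
  "lower_barrier \<beta> x y = (1 - x^2) * (1 + 2 * \<beta> * x) - y * (x - \<beta> * (1 - x^2))"

lemma barrier_slope_ge:
  fixes x \<beta> :: real
  assumes "x \<in> {-1..0}" "\<beta> \<le> 1"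
  shows "\<beta> \<le> \<beta> * (1 - x^2) - x"
proof -
  have "\<beta> * x^2 \<le> 1 * x^2"
    using assms(2) by (intro mult_right_mono) auto
  moreover have "x * (x + 1) \<le> 0"
    using assms(1) by (intro mult_nonpos_nonneg) auto
  ultimately show ?thesis
    by (simp add: power2_eq_square algebra_simps)
qed

lemma lower_barrier_zero_abs_le:
  assumes "x \<in> {-1..0}" "0 < \<beta>" "2 * \<beta> \<le> 1" "lower_barrier \<beta> x y = 0"
  shows "\<bar>y\<bar> \<le> 1 / \<beta>"
proof -
  have "0 \<le> 1 + 2 * \<beta> * x" "1 + 2 * \<beta> * x \<le> 1" "0 \<le> 1 - x^2" "1 - x^2 \<le> 1"
    using assms(1-3) mult_left_mono[of "-x" 1 "2 * \<beta>"] mult_nonneg_nonpos[of \<beta> x] by (auto simp: abs_square_le_1)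
  then have A: "0 \<le> (1 - x^2) * (1 + 2 * \<beta> * x)" "(1 - x^2) * (1 + 2 * \<beta> * x) \<le> 1"
    by (auto intro: mult_le_one)
  have "y * (\<beta> * (1 - x^2) - x) = - ((1 - x^2) * (1 + 2 * \<beta> * x))"
    using assms(4) by (simp add: lower_barrier_def algebra_simps)
  have "\<bar>y\<bar> * \<beta> \<le> \<bar>y\<bar> * (\<beta> * (1 - x^2) - x)"
    using barrier_slope_ge[OF assms(1)] assms(3) by (intro mult_left_mono) auto
  also have "\<dots> = \<bar>y * (\<beta> * (1 - x^2) - x)\<bar>"
    using barrier_slope_ge[OF assms(1), of \<beta>] assms(2,3) by (simp add: abs_mult)
  also have "\<dots> = (1 - x^2) * (1 + 2 * \<beta> * x)"
    using A by (simp only: \<open>y * _ = _\<close> abs_minus_cancel abs_of_nonneg)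
  also have "\<dots> \<le> 1"
    by (fact A)
  finally show ?thesis
    using \<open>0 < \<beta>\<close> by (simp add: field_simps)
qed

lemma trapped_abs_less:
  assumes "x \<in> {-1..0}" "0 < \<beta>" "2 * \<beta> \<le> 1" "lower_barrier \<beta> x y > 0" "y < - x"
  shows "\<bar>y\<bar> < 1 / \<beta>"
proof -
  have "1 \<le> 1 / \<beta>"
    using assms(2,3) by (simp add: field_simps)
  moreover have "- (1 / \<beta>) < y"
  proof (rule ccontr)
    assume "\<not> - (1 / \<beta>) < y"
    have slope: "\<beta> \<le> \<beta> * (1 - x^2) - x"
      using barrier_slope_ge[OF assms(1), of \<beta>] assms(3) by auto
    then have "1 \<le> (- (1 / \<beta>)) * (x - \<beta> * (1 - x^2))"
      using assms(2) by (simp add: field_simps)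
    also have "\<dots> \<le> y * (x - \<beta> * (1 - x^2))"
      using \<open>\<not> - (1 / \<beta>) < y\<close> slope assms(2) by (intro mult_right_mono_neg) auto
    finally have "1 \<le> y * (x - \<beta> * (1 - x^2))" .
    moreover have "(1 - x^2) * (1 + 2 * \<beta> * x) \<le> 1"
      using assms(1-3) mult_left_mono[of "-x" 1 "2 * \<beta>"] mult_nonneg_nonpos[of \<beta> x]
      by (intro mult_le_one) (auto simp: abs_square_le_1)
    ultimately show False
      using assms(4) by (simp add: lower_barrier_def)
  qed
  ultimately show ?thesis
    using assms(1,5) by auto
qed

text \<open>The right-hand side is the derivative of \<open>x \<mapsto> lower_barrier \<beta> x (y x)\<close> when \<open>y' = D\<close>.\<close>
lemma lower_barrier_increasing_at_zero:
  assumes "x \<in> {-1<..0}" "0 < \<beta>" "2 * \<beta> \<le> 1" "8 * \<beta> \<le> e" "lower_barrier \<beta> x y = 0"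
    and riccati: "(1 - x^2) * D + y^2 = -2 * (1 - x^2) + e"
  shows "0 < -2 * x * (1 + 2 * \<beta> * x) + 2 * \<beta> * (1 - x^2) - D * (x - \<beta> * (1 - x^2)) - y * (1 + 2 * \<beta> * x)"
    (is "0 < ?E")
proof -
  have "1 - x^2 > 0" "x^2 \<le> - x"
    using assms(1) mult_nonpos_nonneg[of x "x + 1"] by (auto simp: abs_square_less_1 power2_eq_square algebra_simps)
  have slope: "\<beta> \<le> \<beta> * (1 - x^2) - x"
    using barrier_slope_ge[of x \<beta>] assms(1,3) by auto
  define w where "w = x - \<beta> * (1 - x^2)"
  have zero: "(1 - x^2) * (1 + 2 * \<beta> * x) = y * w"
    using assms(5) by (simp add: lower_barrier_def w_def)
  have "(1 - x^2) * ?E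
      = (1 - x^2) * (-2 * x * (1 + 2 * \<beta> * x) + 2 * \<beta> * (1 - x^2)) - ((1 - x^2) * D) * w
        - y * ((1 - x^2) * (1 + 2 * \<beta> * x))"
    by (simp add: w_def algebra_simps)
  also have "\<dots> = (1 - x^2) * (-2 * x * (1 + 2 * \<beta> * x) + 2 * \<beta> * (1 - x^2))
        - (-2 * (1 - x^2) + e - y^2) * w - y * (y * w)"
    using riccati by (simp only: zero flip: eq_diff_eq)
  also have "\<dots> = (1 - x^2) * (- 4 * \<beta> * x^2) + e * (\<beta> * (1 - x^2) - x)"
    by (simp add: w_def algebra_simps power2_eq_square)
  also have "\<dots> \<ge> (1 - x^2) * (- 4 * \<beta> * x^2) + 8 * \<beta> * (\<beta> * (1 - x^2) - x)"
    using assms(2,4) slope by (intro add_left_mono mult_right_mono) auto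
  finally have E: "(1 - x^2) * ?E \<ge> \<beta> * (8 * \<beta> * (1 - x^2) - 8 * x - 4 * (x^2 * (1 - x^2)))"
    by (simp add: algebra_simps)
  have "x^2 * (1 - x^2) \<le> x^2"
    using \<open>1 - x^2 > 0\<close> by (simp add: mult_left_le)
  moreover have "0 < 8 * \<beta> * (1 - x^2)"
    using \<open>1 - x^2 > 0\<close> \<open>0 < \<beta>\<close> by simp
  ultimately have "0 < 8 * \<beta> * (1 - x^2) - 8 * x - 4 * (x^2 * (1 - x^2))"
    using \<open>x^2 \<le> - x\<close> assms(1) by auto
  then have "(1 - x^2) * ?E > 0"
    using E \<open>0 < \<beta>\<close> by (smt (verit) mult_pos_pos)
  then show ?thesis
    using \<open>1 - x^2 > 0\<close> by (simp add: zero_less_mult_iff)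
qed

lemma riccati_diagonal_crossing_slope:
  fixes x e D :: real
  assumes "x \<in> {-1<..0}" "e < 1" "(1 - x^2) * D + x^2 = -2 * (1 - x^2) + e"
  shows "D < -1"
proof -
  have "(1 - x^2) * (- 1 - D) = 1 - e"
    using assms(3) by (simp add: algebra_simps)
  moreover have "1 - x^2 > 0"
    using assms(1) by (auto simp: abs_square_less_1)
  ultimately show ?thesis
    using assms(2) by (smt (verit) zero_less_mult_iff)
qed

lemma riccati_solution_below_diagonal:
  fixes y e :: "real \<Rightarrow> real"
  assumes "0 < \<beta>" "\<beta> \<le> 1" and e_less: "\<And>x. x \<in> {-1<..0} \<Longrightarrow> e x < 1"
    and "-1 \<le> p" "q \<le> 0" "continuous_on {p..q} y" "y p < - p"
    and sol: "\<And>x. x \<in> {p<..q} \<Longrightarrow> \<bar>y x\<bar> \<le> 1 / \<beta> \<Longrightarrow>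
        \<exists>D. (y has_real_derivative D) (at x within {p..q}) \<and> (1 - x^2) * D + (y x)^2 = -2 * (1 - x^2) + e x"
    and "x \<in> {p..q}"
  shows "y x < - x"
proof -
  have "0 < - x - y x"
  proof (rule pos_if_pos_derivative_at_zeros[where Z = "\<lambda>x. - x - y x", OF _ _ _ \<open>x \<in> {p..q}\<close>])
    fix t assume t: "t \<in> {p<..q}" and "- t - y t = 0"
    then have "y t = - t" "t \<in> {-1<..0}"
      using assms(4,5) by auto
    then have "\<bar>y t\<bar> \<le> 1"
      by auto
    also have "1 \<le> 1 / \<beta>"
      using assms(1,2) by (simp add: field_simps)
    finally obtain D where D: "(y has_real_derivative D) (at t within {p..q})"
      "(1 - t^2) * D + (y t)^2 = -2 * (1 - t^2) + e t"
      using sol[OF t] by blast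
    have "(1 - t^2) * D + t^2 = -2 * (1 - t^2) + e t"
      using D(2) \<open>y t = - t\<close> by simp
    then have "D < -1"
      by (rule riccati_diagonal_crossing_slope[OF \<open>t \<in> {-1<..0}\<close> e_less[OF \<open>t \<in> {-1<..0}\<close>]])
    moreover have "((\<lambda>x. - x - y x) has_real_derivative (- 1 - D)) (at t within {p..q})"
      using D(1) by (auto intro!: derivative_eq_intros)
    ultimately show "\<exists>D>0. ((\<lambda>x. - x - y x) has_real_derivative D) (at t within {p..q})"
      by (intro exI[of _ "- 1 - D"]) auto
  qed (use assms(6,7) in \<open>auto intro!: continuous_intros\<close>)
  then show ?thesis
    by simp
qed

text \<open>
  The equation is only needed where \<open>\<bar>y x\<bar> \<le> 1 / \<beta>\<close>, so that the lemma also covers solutions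
  of the equation with the nonlinearity clipped at \<open>\<plusminus>1 / \<beta>\<close>.
\<close>
lemma riccati_solution_trapped:
  fixes y e :: "real \<Rightarrow> real"
  assumes "0 < \<beta>" and e_bounds: "\<And>x. x \<in> {-1..0} \<Longrightarrow> 8 * \<beta> \<le> e x \<and> e x < 1"
    and "-1 \<le> p" "q \<le> 0" "continuous_on {p..q} y"
    and start: "lower_barrier \<beta> p (y p) > 0" "y p < - p"
    and sol: "\<And>x. x \<in> {p<..q} \<Longrightarrow> \<bar>y x\<bar> \<le> 1 / \<beta> \<Longrightarrow>
        \<exists>D. (y has_real_derivative D) (at x within {p..q}) \<and> (1 - x^2) * D + (y x)^2 = -2 * (1 - x^2) + e x"
    and "x \<in> {p..q}"
  shows "lower_barrier \<beta> x (y x) > 0 \<and> y x < - x"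
proof
  have "2 * \<beta> \<le> 1"
    using e_bounds[of 0] by auto
  show "y x < - x"
    using riccati_solution_below_diagonal[OF \<open>0 < \<beta>\<close> _ _ assms(3-5) start(2) sol \<open>x \<in> {p..q}\<close>]
      \<open>2 * \<beta> \<le> 1\<close> e_bounds by auto
  show "lower_barrier \<beta> x (y x) > 0"
  proof (rule pos_if_pos_derivative_at_zeros[where Z = "\<lambda>x. lower_barrier \<beta> x (y x)", OF _ _ _ \<open>x \<in> {p..q}\<close>])
    fix t assume t: "t \<in> {p<..q}" and zero: "lower_barrier \<beta> t (y t) = 0"
    then have "t \<in> {-1<..0}"
      using assms(3,4) by auto
    then have "\<bar>y t\<bar> \<le> 1 / \<beta>"
      using lower_barrier_zero_abs_le[OF _ \<open>0 < \<beta>\<close> \<open>2 * \<beta> \<le> 1\<close> zero] by auto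
    then obtain D where D: "(y has_real_derivative D) (at t within {p..q})"
      "(1 - t^2) * D + (y t)^2 = -2 * (1 - t^2) + e t"
      using sol[OF t] by blast
    have "((\<lambda>x. lower_barrier \<beta> x (y x)) has_real_derivative
        - 2 * t * (1 + 2 * \<beta> * t) + 2 * \<beta> * (1 - t^2) - D * (t - \<beta> * (1 - t^2)) - y t * (1 + 2 * \<beta> * t))
        (at t within {p..q})"
      unfolding lower_barrier_def by (rule derivative_eq_intros D(1) refl)+ (simp add: algebra_simps)
    moreover have "0 < - 2 * t * (1 + 2 * \<beta> * t) + 2 * \<beta> * (1 - t^2) - D * (t - \<beta> * (1 - t^2))
        - y t * (1 + 2 * \<beta> * t)"
      using lower_barrier_increasing_at_zero[OF \<open>t \<in> {-1<..0}\<close> \<open>0 < \<beta>\<close> \<open>2 * \<beta> \<le> 1\<close> _ zero D(2)]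
        e_bounds[of t] \<open>t \<in> {-1<..0}\<close> by auto
    ultimately show "\<exists>D>0. ((\<lambda>x. lower_barrier \<beta> x (y x)) has_real_derivative D) (at t within {p..q})"
      by blast
  qed (use assms(5) start in \<open>auto intro!: continuous_intros simp: lower_barrier_def\<close>)
qed

section \<open>Extension past the given interval\<close>

lemma riccati_difference_growth:
  fixes u v w Du Dv :: real
  assumes "0 < m" "m \<le> w" "\<bar>u\<bar> \<le> M" "\<bar>v\<bar> \<le> M" "w * Du + u^2 = w * Dv + v^2"
  shows "(u - v) * (Du - Dv) \<le> 2 * M / m * (u - v)^2"
proof -
  have d: "w * Du - w * Dv = v^2 - u^2"
    using assms(5) by linarith
  have "w * ((u - v) * (Du - Dv)) = (u - v) * (w * Du - w * Dv)"
    by (simp add: algebra_simps)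
  also have "\<dots> = - (u + v) * (u - v)^2"
    by (simp only: d) (simp add: power2_eq_square algebra_simps)
  also have "\<dots> \<le> 2 * M * (u - v)^2"
    using assms(3,4) by (intro mult_right_mono) auto
  also have "\<dots> = 2 * M / m * (m * (u - v)^2)"
    using assms(1) by simp
  also have "\<dots> \<le> 2 * M / m * (w * (u - v)^2)"
    using assms(1-3) by (intro mult_left_mono mult_right_mono) auto
  also have "\<dots> = w * (2 * M / m * (u - v)^2)"
    by (simp add: mult_ac)
  finally show ?thesis
    by (rule mult_left_le_imp_le) (use assms(1,2) in linarith)
qed

lemma riccati_solutions_unique:
  fixes u v w :: "real \<Rightarrow> real"
  assumes "a \<le> b" "continuous_on {a..b} u" "continuous_on {a..b} v" "u a = v a" "0 < m"
    and weight: "\<And>z. z \<in> {a<..<b} \<Longrightarrow> m \<le> w z"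
    and bound: "\<And>z. z \<in> {a<..<b} \<Longrightarrow> \<bar>u z\<bar> \<le> M \<and> \<bar>v z\<bar> \<le> M"
    and deriv: "\<And>z. z \<in> {a<..<b} \<Longrightarrow> \<exists>Du Dv. (u has_real_derivative Du) (at z) \<and>
        (v has_real_derivative Dv) (at z) \<and> w z * Du + (u z)^2 = w z * Dv + (v z)^2"
  shows "u b = v b"
proof -
  define K where "K = 2 * M / m"
  define W where "W z = (u z - v z)^2 * exp (- (2 * K) * z)" for z
  have "W b \<le> W a"
  proof (rule DERIV_nonpos_imp_decreasing_open[OF \<open>a \<le> b\<close>])
    fix z assume "a < z" "z < b"
    then have "z \<in> {a<..<b}"
      by simp
    then obtain Du Dv where D: "(u has_real_derivative Du) (at z)" "(v has_real_derivative Dv) (at z)"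
      and eq: "w z * Du + (u z)^2 = w z * Dv + (v z)^2"
      using deriv by blast
    have "(u z - v z) * (Du - Dv) \<le> K * (u z - v z)^2"
      unfolding K_def using weight bound \<open>z \<in> {a<..<b}\<close> \<open>0 < m\<close> eq by (intro riccati_difference_growth) auto
    moreover have "(W has_real_derivative
        2 * exp (- (2 * K) * z) * ((u z - v z) * (Du - Dv) - K * (u z - v z)^2)) (at z)"
      unfolding W_def by (auto intro!: derivative_eq_intros D simp: algebra_simps power2_eq_square)
    ultimately show "\<exists>y. (W has_real_derivative y) (at z) \<and> y \<le> 0"
      by (force intro: mult_nonneg_nonpos)
  qed (use assms(2,3) in \<open>auto simp: W_def intro!: continuous_intros\<close>)
  then have "(u b - v b)^2 * exp (- (2 * K) * b) \<le> 0"
    by (simp add: W_def \<open>u a = v a\<close>)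
  then show ?thesis
    by (simp add: mult_le_0_iff)
qed

lemma clamp_square_lipschitz:
  fixes M u v :: real
  assumes "0 \<le> M"
  shows "\<bar>(clamp (- M) M u)^2 - (clamp (- M) M v)^2\<bar> \<le> 2 * M * \<bar>u - v\<bar>"
proof -
  define cu cv where "cu = clamp (- M) M u" and "cv = clamp (- M) M v"
  have "\<bar>cu\<bar> \<le> M" "\<bar>cv\<bar> \<le> M"
    using clamp_in_interval[of "- M" M u] clamp_in_interval[of "- M" M v] assms
    unfolding cu_def cv_def cbox_interval by (auto simp: abs_le_iff)
  then have "\<bar>cu + cv\<bar> * \<bar>cu - cv\<bar> \<le> 2 * M * \<bar>u - v\<bar>"
    using dist_clamps_le_dist_args[of "- M" M u v] assms
    by (intro mult_mono) (auto simp: cu_def cv_def dist_real_def)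
  moreover have "cu^2 - cv^2 = (cu + cv) * (cu - cv)"
    by (simp add: power2_eq_square algebra_simps)
  ultimately show ?thesis
    by (simp add: cu_def cv_def abs_mult)
qed

lemma clamped_riccati_ode_solvable:
  fixes e :: "real \<Rightarrow> real" and M :: real
  assumes "continuous_on {-1..0} e" "-1 < a" "a \<le> 0" "0 \<le> M"
  shows "\<exists>\<phi>. \<phi> a = y0 \<and> (\<forall>x\<in>{a..0}.
    (\<phi> has_real_derivative (-2 * (1 - x^2) + e x - (clamp (- M) M (\<phi> x))^2) / (1 - x^2)) (at x within {a..0}))"
proof -
  define G where "G t y = (-2 * (1 - t^2) + e t - (clamp (- M) M y)^2) / (1 - t^2)" for t y
  have weight: "1 - a^2 \<le> 1 - t^2" "0 < 1 - a^2" if "t \<in> {a..0}" for t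
    using that \<open>-1 < a\<close> by (auto simp: abs_le_square_iff[symmetric] abs_square_less_1)
  have "\<bar>G t u - G t v\<bar> \<le> 2 * M / (1 - a^2) * \<bar>u - v\<bar>" if "t \<in> {a..0}" for t u v
  proof -
    have "\<bar>G t u - G t v\<bar> = \<bar>(clamp (- M) M u)^2 - (clamp (- M) M v)^2\<bar> / (1 - t^2)"
      using weight[OF that] by (simp add: G_def diff_divide_distrib[symmetric] abs_minus_commute)
    also have "\<dots> \<le> 2 * M * \<bar>u - v\<bar> / (1 - a^2)"
      using clamp_square_lipschitz[OF \<open>0 \<le> M\<close>, of u v] weight[OF that] \<open>0 \<le> M\<close>
      by (intro frac_le) auto
    finally show ?thesis
      by simp
  qed
  moreover have "continuous_on {a..0} (\<lambda>t. G t (\<psi> t))" if "continuous_on {a..0} \<psi>" for \<psi>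
  proof -
    have "continuous_on UNIV (clamp (- M) M :: real \<Rightarrow> real)"
      using clamp_continuous_on[of "- M" M "\<lambda>y. y" UNIV] by (simp add: continuous_on_id)
    then have "continuous_on {a..0} (\<lambda>t. clamp (- M) M (\<psi> t))"
      using that by (rule continuous_on_compose2) auto
    moreover have "continuous_on {a..0} e"
      using continuous_on_subset[OF \<open>continuous_on {-1..0} e\<close>] \<open>-1 < a\<close> by auto
    moreover have "\<forall>t\<in>{a..0}. 1 - t^2 \<noteq> 0"
      using weight by fastforce
    ultimately show ?thesis
      unfolding G_def by (intro continuous_intros)
  qed
  ultimately obtain \<phi> where "\<phi> a = y0"
    "\<forall>x\<in>{a..0}. (\<phi> has_real_derivative G x (\<phi> x)) (at x within {a..0})"
    using lipschitz_ode_solvable[of a 0 "2 * M / (1 - a^2)" G y0] \<open>a \<le> 0\<close> \<open>0 \<le> M\<close> weight[of a]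
    by fastforce
  then show ?thesis
    unfolding G_def by blast
qed

lemma riccati_trapped_solution_exists:
  fixes e :: "real \<Rightarrow> real"
  assumes "0 < \<beta>" and e_bounds: "\<And>x. x \<in> {-1..0} \<Longrightarrow> 8 * \<beta> \<le> e x \<and> e x < 1"
    and "continuous_on {-1..0} e" "-1 < a" "a \<le> 0"
    and start: "lower_barrier \<beta> a y0 > 0" "y0 < - a"
  shows "\<exists>\<phi>. \<phi> a = y0 \<and> continuous_on {a..0} \<phi> \<and>
    (\<forall>x\<in>{a..0}. (\<exists>D. (\<phi> has_real_derivative D) (at x within {a..0}) \<and>
        (1 - x^2) * D + (\<phi> x)^2 = -2 * (1 - x^2) + e x) \<and>
      lower_barrier \<beta> x (\<phi> x) > 0 \<and> \<phi> x < - x)"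
proof -
  define M where "M = 1 / \<beta>"
  obtain \<phi> where "\<phi> a = y0" and \<phi>: "\<And>x. x \<in> {a..0} \<Longrightarrow>
      (\<phi> has_real_derivative (-2 * (1 - x^2) + e x - (clamp (- M) M (\<phi> x))^2) / (1 - x^2)) (at x within {a..0})"
    using clamped_riccati_ode_solvable[OF assms(3-5), of M y0] \<open>0 < \<beta>\<close> by (auto simp: M_def)
  have "continuous_on {a..0} \<phi>"
    using \<phi> DERIV_continuous continuous_on_eq_continuous_within by blast
  have sol: "\<exists>D. (\<phi> has_real_derivative D) (at x within {a..0}) \<and>
      (1 - x^2) * D + (\<phi> x)^2 = -2 * (1 - x^2) + e x" if "x \<in> {a..0}" "\<bar>\<phi> x\<bar> \<le> 1 / \<beta>" for x
  proof -
    have "clamp (- M) M (\<phi> x) = \<phi> x"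
      using clamp_cancel_cbox[of "\<phi> x" "- M" M] that(2) by (simp add: cbox_interval M_def abs_le_iff)
    moreover have "1 - x^2 \<noteq> 0"
      using that(1) \<open>-1 < a\<close> by (auto simp: abs_square_eq_1)
    ultimately show ?thesis
      using \<phi>[OF that(1)] by (intro exI[of _ "(-2 * (1 - x^2) + e x - (\<phi> x)^2) / (1 - x^2)"]) simp
  qed
  have trapped: "lower_barrier \<beta> x (\<phi> x) > 0 \<and> \<phi> x < - x" if "x \<in> {a..0}" for x
  proof (rule riccati_solution_trapped[where e = e and p = a and q = 0,
        OF \<open>0 < \<beta>\<close> e_bounds _ _ \<open>continuous_on {a..0} \<phi>\<close> _ _ _ that])
    show "\<exists>D. (\<phi> has_real_derivative D) (at t within {a..0}) \<and>
        (1 - t^2) * D + (\<phi> t)^2 = -2 * (1 - t^2) + e t" if "t \<in> {a<..0}" "\<bar>\<phi> t\<bar> \<le> 1 / \<beta>" for t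
      using sol that by simp
  qed (use start \<open>\<phi> a = y0\<close> \<open>-1 < a\<close> in auto)
  have "\<bar>\<phi> x\<bar> \<le> 1 / \<beta>" if "x \<in> {a..0}" for x
    using trapped_abs_less[of x \<beta>] trapped[OF that] that e_bounds[of 0] \<open>0 < \<beta>\<close> \<open>-1 < a\<close> by fastforce
  then show ?thesis
    using \<open>\<phi> a = y0\<close> \<open>continuous_on {a..0} \<phi>\<close> sol trapped by blast
qed

lemma continuous_on_Icc_if_deriv_on_Ioc:
  fixes f :: "real \<Rightarrow> real"
  assumes "continuous (at p within {p..q}) f"
    and deriv: "\<And>x. x \<in> {p<..q} \<Longrightarrow> \<exists>D. (f has_real_derivative D) (at x within {p..q})"
  shows "continuous_on {p..q} f"
proof -
  have "continuous (at x within {p..q}) f" if "x \<in> {p..q}" for x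
  proof (cases "x = p")
    case False
    with that obtain D where "(f has_real_derivative D) (at x within {p..q})"
      using deriv by force
    then show ?thesis
      by (rule DERIV_continuous)
  qed (use assms(1) in simp)
  then show ?thesis
    by (simp add: continuous_on_eq_continuous_within)
qed

lemma riccati_solution_trapped_from_boundary:
  fixes T e :: "real \<Rightarrow> real"
  assumes "0 < \<beta>" and e_bounds: "\<And>x. x \<in> {-1..0} \<Longrightarrow> 8 * \<beta> \<le> e x \<and> e x < 1"
    and "c \<le> 0"
    and T_sol: "\<And>x. x \<in> {-1<..<c} \<Longrightarrow>
        \<exists>D. (T has_real_derivative D) (at x) \<and> (1 - x^2) * D + (T x)^2 = -2 * (1 - x^2) + e x"
    and T_cont: "continuous (at_right (-1)) T" and "0 < T (-1)" "T (-1) < 1"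
    and "x \<in> {-1..<c}"
  shows "lower_barrier \<beta> x (T x) > 0 \<and> T x < - x"
proof -
  define q where "q = (x + c) / 2"
  have q: "x \<le> q" "-1 < q" "q < c" "q \<le> 0"
    using \<open>x \<in> {-1..<c}\<close> \<open>c \<le> 0\<close> by (auto simp: q_def)
  have sol: "\<exists>D. (T has_real_derivative D) (at t within {-1..q}) \<and>
      (1 - t^2) * D + (T t)^2 = -2 * (1 - t^2) + e t" if "t \<in> {-1<..q}" for t
    using T_sol[of t] that q by (auto intro: has_field_derivative_at_within)
  have "continuous_on {-1..q} T"
  proof (rule continuous_on_Icc_if_deriv_on_Ioc)
    show "continuous (at (-1) within {-1..q}) T"
      using T_cont at_within_Icc_at_right[OF q(2)] by simp
  qed (use sol in blast)
  moreover have "lower_barrier \<beta> (-1) (T (-1)) > 0"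
    using \<open>0 < T (-1)\<close> by (simp add: lower_barrier_def)
  ultimately show ?thesis
    using riccati_solution_trapped[where e = e and p = "-1" and q = q, OF \<open>0 < \<beta>\<close> e_bounds]
      sol q \<open>x \<in> {-1..<c}\<close> \<open>T (-1) < 1\<close> by auto
qed

lemma riccati_trapped_solutions_agree:
  fixes T \<phi> e :: "real \<Rightarrow> real"
  assumes "0 < \<beta>" "2 * \<beta> \<le> 1" "-1 < a" "a < c" "c \<le> 0"
    and T_sol: "\<And>x. x \<in> {-1<..<c} \<Longrightarrow>
        \<exists>D. (T has_real_derivative D) (at x) \<and> (1 - x^2) * D + (T x)^2 = -2 * (1 - x^2) + e x"
    and T_trapped: "\<And>x. x \<in> {a..<c} \<Longrightarrow> lower_barrier \<beta> x (T x) > 0 \<and> T x < - x"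
    and "continuous_on {a..0} \<phi>"
    and \<phi>_sol: "\<And>x. x \<in> {a..0} \<Longrightarrow> \<exists>D. (\<phi> has_real_derivative D) (at x within {a..0}) \<and>
        (1 - x^2) * D + (\<phi> x)^2 = -2 * (1 - x^2) + e x"
    and \<phi>_trapped: "\<And>x. x \<in> {a..0} \<Longrightarrow> lower_barrier \<beta> x (\<phi> x) > 0 \<and> \<phi> x < - x"
    and "\<phi> a = T a" "x \<in> {a..<c}"
  shows "\<phi> x = T x"
proof (rule riccati_solutions_unique[where u = \<phi> and v = T and a = a and b = x and w = "\<lambda>z. 1 - z^2"
      and m = "1 - a^2" and M = "1 / \<beta>"])
  show "continuous_on {a..x} \<phi>"
    using continuous_on_subset[OF \<open>continuous_on {a..0} \<phi>\<close>] \<open>x \<in> {a..<c}\<close> \<open>c \<le> 0\<close> by auto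
  have "continuous (at t) T" if "t \<in> {a..x}" for t
    using T_sol[of t] that \<open>x \<in> {a..<c}\<close> \<open>-1 < a\<close> by (auto intro: DERIV_isCont)
  then show "continuous_on {a..x} T"
    by (simp add: continuous_at_imp_continuous_on)
  fix z assume z: "z \<in> {a<..<x}"
  then have z': "z \<in> {-1..0}" "z \<in> {a..<c}" "z \<in> {a..0}" "z \<in> {-1<..<c}"
    using \<open>x \<in> {a..<c}\<close> \<open>-1 < a\<close> \<open>c \<le> 0\<close> by auto
  show "1 - a^2 \<le> 1 - z^2"
    using z \<open>-1 < a\<close> \<open>x \<in> {a..<c}\<close> \<open>c \<le> 0\<close> by (auto simp: abs_le_square_iff[symmetric])
  show "\<bar>\<phi> z\<bar> \<le> 1 / \<beta> \<and> \<bar>T z\<bar> \<le> 1 / \<beta>"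
    using trapped_abs_less[OF z'(1) \<open>0 < \<beta>\<close> \<open>2 * \<beta> \<le> 1\<close>] \<phi>_trapped[OF z'(3)] T_trapped[OF z'(2)]
    by (simp add: less_imp_le)
  obtain D\<phi> where "(\<phi> has_real_derivative D\<phi>) (at z within {a..0})"
    "(1 - z^2) * D\<phi> + (\<phi> z)^2 = -2 * (1 - z^2) + e z"
    using \<phi>_sol[OF z'(3)] by blast
  moreover have "at z within {a..0} = at z"
    using z \<open>x \<in> {a..<c}\<close> \<open>c \<le> 0\<close> by (intro at_within_interior) auto
  moreover obtain DT where "(T has_real_derivative DT) (at z)"
    "(1 - z^2) * DT + (T z)^2 = -2 * (1 - z^2) + e z"
    using T_sol[OF z'(4)] by blast
  ultimately show "\<exists>Du Dv. (\<phi> has_real_derivative Du) (at z) \<and> (T has_real_derivative Dv) (at z) \<and>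
      (1 - z^2) * Du + (\<phi> z)^2 = (1 - z^2) * Dv + (T z)^2"
    by (intro exI[of _ D\<phi>] exI[of _ DT]) auto
qed (use \<open>x \<in> {a..<c}\<close> \<open>\<phi> a = T a\<close> \<open>-1 < a\<close> \<open>a < c\<close> \<open>c \<le> 0\<close> in \<open>auto simp: abs_square_less_1\<close>)

lemma riccati_trapped_extension:
  fixes T e :: "real \<Rightarrow> real"
  assumes "0 < \<beta>" and e_bounds: "\<And>x. x \<in> {-1..0} \<Longrightarrow> 8 * \<beta> \<le> e x \<and> e x < 1"
    and "continuous_on {-1..0} e" "-1 < a" "a < c" "c \<le> 0"
    and T_sol: "\<And>x. x \<in> {-1<..<c} \<Longrightarrow>
        \<exists>D. (T has_real_derivative D) (at x) \<and> (1 - x^2) * D + (T x)^2 = -2 * (1 - x^2) + e x"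
    and T_trapped: "\<And>x. x \<in> {a..<c} \<Longrightarrow> lower_barrier \<beta> x (T x) > 0 \<and> T x < - x"
  shows "\<exists>\<phi>. (\<forall>x\<in>{a..<c}. \<phi> x = T x) \<and>
    (\<forall>x\<in>{a..0}. \<exists>D. (\<phi> has_real_derivative D) (at x within {a..0}) \<and>
        (1 - x^2) * D + (\<phi> x)^2 = -2 * (1 - x^2) + e x) \<and> \<phi> 0 < 0"
proof -
  have "2 * \<beta> \<le> 1"
    using e_bounds[of 0] by auto
  obtain \<phi> where "\<phi> a = T a" "continuous_on {a..0} \<phi>"
    and \<phi>_sol: "\<And>x. x \<in> {a..0} \<Longrightarrow> \<exists>D. (\<phi> has_real_derivative D) (at x within {a..0}) \<and>
        (1 - x^2) * D + (\<phi> x)^2 = -2 * (1 - x^2) + e x"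
    and \<phi>_trapped: "\<And>x. x \<in> {a..0} \<Longrightarrow> lower_barrier \<beta> x (\<phi> x) > 0 \<and> \<phi> x < - x"
    using riccati_trapped_solution_exists[OF \<open>0 < \<beta>\<close> e_bounds \<open>continuous_on {-1..0} e\<close> \<open>-1 < a\<close>, of "T a"]
      T_trapped[of a] assms(5,6) by auto
  have "\<forall>x\<in>{a..<c}. \<phi> x = T x"
    using riccati_trapped_solutions_agree[OF \<open>0 < \<beta>\<close> \<open>2 * \<beta> \<le> 1\<close> assms(4-6) T_sol T_trapped
        \<open>continuous_on {a..0} \<phi>\<close> \<phi>_sol \<phi>_trapped \<open>\<phi> a = T a\<close>] by blast
  moreover have "\<phi> 0 < 0"
    using \<phi>_trapped[of 0] \<open>a < c\<close> \<open>c \<le> 0\<close> by auto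
  ultimately show ?thesis
    using \<phi>_sol by blast
qed

lemma riccati_solution_from_pieces:
  fixes S T \<phi> e :: "real \<Rightarrow> real"
  assumes "-1 < a" "a < c"
    and T_sol: "\<And>x. x \<in> {-1<..<c} \<Longrightarrow>
        \<exists>D. (T has_real_derivative D) (at x) \<and> (1 - x^2) * D + (T x)^2 = -2 * (1 - x^2) + e x"
    and \<phi>_sol: "\<And>x. x \<in> {a..0} \<Longrightarrow> \<exists>D. (\<phi> has_real_derivative D) (at x within {a..0}) \<and>
        (1 - x^2) * D + (\<phi> x)^2 = -2 * (1 - x^2) + e x"
    and ST: "\<And>x. x \<in> {-1..<c} \<Longrightarrow> S x = T x" and S\<phi>: "\<And>x. x \<in> {a..0} \<Longrightarrow> S x = \<phi> x"
    and "x \<in> {-1<..0}"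
  shows "\<exists>D. (S has_real_derivative D) (at x within {-1..0}) \<and> (1 - x^2) * D + (S x)^2 = -2 * (1 - x^2) + e x"
proof (cases "x < c")
  case True
  with \<open>x \<in> {-1<..0}\<close> have "x \<in> {-1<..<c}"
    by auto
  then obtain D where D: "(T has_real_derivative D) (at x)" "(1 - x^2) * D + (T x)^2 = -2 * (1 - x^2) + e x"
    using T_sol by blast
  have "(S has_real_derivative D) (at x)"
    using \<open>x \<in> {-1<..<c}\<close> ST by (intro has_field_derivative_transform_within_open[OF D(1), of "{-1<..<c}"]) auto
  then show ?thesis
    using D(2) ST[of x] \<open>x \<in> {-1<..<c}\<close> by (auto intro: has_field_derivative_at_within)
next
  case False
  with \<open>x \<in> {-1<..0}\<close> \<open>a < c\<close> have "x \<in> {a..0}" "a < x"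
    by auto
  then obtain D where D: "(\<phi> has_real_derivative D) (at x within {a..0})"
    "(1 - x^2) * D + (\<phi> x)^2 = -2 * (1 - x^2) + e x"
    using \<phi>_sol by blast
  have "(S has_real_derivative D) (at x within {a..0})"
    using \<open>x \<in> {a..0}\<close> S\<phi> by (intro has_field_derivative_transform_within[OF D(1), where d = 1]) auto
  moreover have "at x within {a..0} = at x within {-1..0}"
    using \<open>a < x\<close> \<open>-1 < a\<close> by (intro at_within_nhd[of x "{a<..}"]) auto
  ultimately show ?thesis
    using D(2) S\<phi>[OF \<open>x \<in> {a..0}\<close>] by auto
qed

lemma riccati_solution_glue:
  fixes T \<phi> e :: "real \<Rightarrow> real"
  assumes "-1 < a" "a < c" "c \<le> 0"
    and T_sol: "\<And>x. x \<in> {-1<..<c} \<Longrightarrow>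
        \<exists>D. (T has_real_derivative D) (at x) \<and> (1 - x^2) * D + (T x)^2 = -2 * (1 - x^2) + e x"
    and T_cont: "continuous (at_right (-1)) T"
    and \<phi>_sol: "\<And>x. x \<in> {a..0} \<Longrightarrow> \<exists>D. (\<phi> has_real_derivative D) (at x within {a..0}) \<and>
        (1 - x^2) * D + (\<phi> x)^2 = -2 * (1 - x^2) + e x"
    and agree: "\<And>x. x \<in> {a..<c} \<Longrightarrow> \<phi> x = T x"
  shows "\<exists>S. (\<forall>x\<in>{-1..<c}. S x = T x) \<and> continuous_on {-1..0} S \<and>
    (\<forall>x\<in>{-1<..0}. \<exists>D. (S has_real_derivative D) (at x within {-1..0}) \<and>
        (1 - x^2) * D + (S x)^2 = -2 * (1 - x^2) + e x) \<and> S 0 = \<phi> 0"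
proof -
  define S where "S x = (if x \<le> a then T x else \<phi> x)" for x
  have ST: "S x = T x" if "x \<in> {-1..<c}" for x
    using that agree by (auto simp: S_def)
  have S\<phi>: "S x = \<phi> x" if "x \<in> {a..0}" for x
    using that agree[of a] \<open>a < c\<close> by (auto simp: S_def)
  note S_sol = riccati_solution_from_pieces[OF assms(1,2) T_sol \<phi>_sol ST S\<phi>]
  have "continuous (at (-1) within {-1..0}) T"
    using T_cont by (simp add: at_within_Icc_at_right)
  then have "continuous (at (-1) within {-1..0}) S"
  proof (rule continuous_transform_within[where \<delta> = "c + 1"])
    show "T y = S y" if "y \<in> {-1..0}" "dist y (-1) < c + 1" for y
      using ST[of y] that by (auto simp: dist_real_def)
  qed (use \<open>-1 < a\<close> \<open>a < c\<close> in auto)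
  then have "continuous_on {-1..0} S"
    using S_sol by (intro continuous_on_Icc_if_deriv_on_Ioc) blast+
  moreover have "S 0 = \<phi> 0"
    using S\<phi>[of 0] \<open>a < c\<close> \<open>c \<le> 0\<close> by simp
  ultimately show ?thesis
    using ST S_sol by blast
qed

theorem proposition7:
  fixes f T :: "real \<Rightarrow> real" and c :: real
  assumes f_cont: "continuous_on {-1..0} f"
    and f_bounds: "\<And>x. x \<in> {-1..0} \<Longrightarrow> 0 < f x \<and> f x < 1/2"
    and c: "-1 < c" "c \<le> 0"
    and T_sol: "\<And>x. x \<in> {-1<..<c} \<Longrightarrow>
        \<exists>D. (T has_real_derivative D) (at x) \<and>
            (1 - x^2) * D + (T x)^2 = -2 * (1 - x^2) + (1 - 2 * f x)"
    and T_cont: "continuous (at_right (-1)) T"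
    and T_init: "T (-1) = sqrt (1 - 2 * f (-1))"
  shows "\<exists>S. (\<forall>x \<in> {-1..<c}. S x = T x) \<and>
             continuous_on {-1..0} S \<and>
             (\<forall>x \<in> {-1<..0}. \<exists>D. (S has_real_derivative D) (at x within {-1..0}) \<and>
                 (1 - x^2) * D + (S x)^2 = -2 * (1 - x^2) + (1 - 2 * f x)) \<and>
             S 0 < 0"
proof -
  obtain x0 where x0: "x0 \<in> {-1..0}" "\<And>y. y \<in> {-1..0} \<Longrightarrow> f y \<le> f x0"
    using continuous_attains_sup[OF compact_Icc _ f_cont] by auto
  define \<beta> where "\<beta> = (1 - 2 * f x0) / 8"
  have "0 < \<beta>"
    using f_bounds[OF x0(1)] by (simp add: \<beta>_def)
  have e_bounds: "8 * \<beta> \<le> 1 - 2 * f x \<and> 1 - 2 * f x < 1" if "x \<in> {-1..0}" for x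
    using f_bounds[OF that] x0(2)[OF that] by (simp add: \<beta>_def)
  have e_cont: "continuous_on {-1..0} (\<lambda>x. 1 - 2 * f x)"
    using f_cont by (intro continuous_intros)
  have "0 < T (-1)" "T (-1) < 1"
    using f_bounds[of "-1"] by (auto simp: T_init)
  define a where "a = (c - 1) / 2"
  have a: "-1 < a" "a < c"
    using c by (auto simp: a_def)
  have "lower_barrier \<beta> x (T x) > 0 \<and> T x < - x" if "x \<in> {a..<c}" for x
    using riccati_solution_trapped_from_boundary[OF \<open>0 < \<beta>\<close> e_bounds c(2) T_sol T_cont
        \<open>0 < T (-1)\<close> \<open>T (-1) < 1\<close>] that a by auto
  then obtain \<phi> where "\<forall>x\<in>{a..<c}. \<phi> x = T x" "\<phi> 0 < 0"
    and "\<forall>x\<in>{a..0}. \<exists>D. (\<phi> has_real_derivative D) (at x within {a..0}) \<and>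
        (1 - x^2) * D + (\<phi> x)^2 = -2 * (1 - x^2) + (1 - 2 * f x)"
    using riccati_trapped_extension[OF \<open>0 < \<beta>\<close> e_bounds e_cont a c(2) T_sol] by blast
  with riccati_solution_glue[OF a c(2) T_sol T_cont] show ?thesis
    by metis
qed

end
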